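(* Let $\mathcal{C}\le\mathbb{F}_q^n$ be a linear code of even length $n$ with $q\neq 2$, and suppose $W_\mathcal{C}(x)=(x^2+a)^{n/2}$ for some $a\in\mathbb{R}\setminus\{0\}$. Then $a=q-1$ and $\mathcal{C}$ is monomially equivalent to $\bigoplus_{i=1}^{n/2}\langle(1,1)\rangle_{\mathbb{F}_q}$.
   Context: $W_\mathcal{C}(x)=\sum_{c\in\mathcal{C}}x^{n-\mathrm{wt}(c)}$, where $\mathrm{wt}(c)$ is the number of nonzero coordinates of $c$. Two codes in $\mathbb{F}_q^n$ are monomially equivalent if one is the image of the other under $v\mapsto DPv$ with $D$ an invertible diagonal matrix and $P$ a permutation matrix. $\bigoplus_{i=1}^{n/2}\langle(1,1)\rangle_{\mathbb{F}_q}\le\mathbb{F}_q^n$ is the code with block-diagonal generator matrix consisting of $n/2$ blocks $(1\ 1)$. *)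

theory Defs
  imports "HOL-Library.Cardinality" "HOL-Computational_Algebra.Polynomial" "HOL-Combinatorics.Permutations"
begin

text \<open>Vectors of F_q^n are represented as functions nat => 'a vanishing outside {..<n}.\<close>

definition Fqn :: "nat \<Rightarrow> (nat \<Rightarrow> 'a::field) set" where
  "Fqn n = {v. \<forall>i\<ge>n. v i = 0}"

definition linear_code :: "nat \<Rightarrow> (nat \<Rightarrow> 'a::field) set \<Rightarrow> bool" where
  "linear_code n C \<longleftrightarrow> C \<subseteq> Fqn n \<and> (\<lambda>_. 0) \<in> C
     \<and> (\<forall>u\<in>C. \<forall>v\<in>C. (\<lambda>i. u i + v i) \<in> C)
     \<and> (\<forall>c. \<forall>v\<in>C. (\<lambda>i. c * v i) \<in> C)"

definition wt :: "nat \<Rightarrow> (nat \<Rightarrow> 'a::zero) \<Rightarrow> nat" where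
  "wt n c = card {i\<in>{..<n}. c i \<noteq> 0}"

definition weight_enum :: "nat \<Rightarrow> (nat \<Rightarrow> 'a::zero) set \<Rightarrow> real poly" where
  "weight_enum n C = (\<Sum>c\<in>C. monom 1 (n - wt n c))"

definition monomially_equivalent :: "nat \<Rightarrow> (nat \<Rightarrow> 'a::field) set \<Rightarrow> (nat \<Rightarrow> 'a) set \<Rightarrow> bool" where
  "monomially_equivalent n C1 C2 \<longleftrightarrow>
     (\<exists>\<sigma> d. \<sigma> permutes {..<n} \<and> (\<forall>i<n. d i \<noteq> (0::'a)) \<and>
        C2 = (\<lambda>v. \<lambda>i. if i < n then d i * v (\<sigma> i) else 0) ` C1)"

text \<open>The code with block-diagonal generator matrix of n/2 blocks (1 1): codewords m G,
  whose j-th coordinate (j < n) is m (j div 2).\<close>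
definition rep_sum_code :: "nat \<Rightarrow> (nat \<Rightarrow> 'a::field) set" where
  "rep_sum_code n = {v. \<exists>m::nat \<Rightarrow> 'a. v = (\<lambda>j. if j < n then m (j div 2) else 0)}"

end

theory Submission
  imports Defs
begin

text \<open>
  Write n = 2N. Comparing coefficients in W(x) = (x^2 + a)^N shows that C has a word of full
  weight, only words of even weight, and N a words of weight 2, while W(1) = |C| = (1 + a)^N and
  W'(1) = sum of (n - wt c) = 2N (1 + a)^(N-1). Because of the full-weight word every coordinate
  vanishes on exactly |C|/q codewords, so double counting gives q W'(1) = n |C|, i.e. q = 1 + a.

  In an even code over a field with q > 2, words of weight 2 with the same support are
  proportional and words of weight 2 with different supports have disjoint supports (otherwise a
  suitable combination has weight 3). Hence the N (q - 1) words of weight 2 have exactly N supports,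
  which partition the coordinates into pairs. Picking one word per pair, a permutation followed by
  a diagonal rescaling maps C to a code containing the code with generator blocks (1 1); since both
  codes have q^N elements, the image is exactly that code.
\<close>


section \<open>Coefficients of powers of x^2 + a\<close>

lemma coeff_quadratic_mult:
  fixes a :: "'a::comm_semiring_1"
  shows "coeff ([:a, 0, 1:] * p) k = a * coeff p k + (if 2 \<le> k then coeff p (k - 2) else 0)"
proof -
  have "[:a, 0, 1:] * p = smult a p + monom 1 2 * p"
    by (simp add: monom_altdef power2_eq_square algebra_simps)
  then show ?thesis by (simp add: coeff_monom_mult)
qed

lemma coeff_quadratic_power_Suc:
  fixes a :: "'a::comm_semiring_1"
  shows "coeff ([:a, 0, 1:] ^ Suc N) k =
    a * coeff ([:a, 0, 1:] ^ N) k + (if 2 \<le> k then coeff ([:a, 0, 1:] ^ N) (k - 2) else 0)"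
  by (simp only: power_Suc coeff_quadratic_mult)

lemma coeff_quadratic_power_odd:
  fixes a :: "'a::comm_semiring_1"
  shows "odd k \<Longrightarrow> coeff ([:a, 0, 1:] ^ N) k = 0"
proof (induction N arbitrary: k)
  case 0
  then show ?case by (cases k) auto
next
  case (Suc N)
  then show ?case unfolding coeff_quadratic_power_Suc by auto
qed

lemma coeff_quadratic_power_above:
  fixes a :: "'a::comm_semiring_1"
  shows "2 * N < k \<Longrightarrow> coeff ([:a, 0, 1:] ^ N) k = 0"
proof (induction N arbitrary: k)
  case 0
  then show ?case by (cases k) auto
next
  case (Suc N)
  then show ?case unfolding coeff_quadratic_power_Suc by auto
qed

lemma coeff_quadratic_power_degree:
  fixes a :: "'a::comm_semiring_1"
  shows "coeff ([:a, 0, 1:] ^ N) (2 * N) = 1"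
proof (induction N)
  case (Suc N)
  then show ?case unfolding coeff_quadratic_power_Suc by (simp add: coeff_quadratic_power_above)
qed simp

lemma coeff_quadratic_power_subdegree:
  fixes a :: "'a::comm_semiring_1"
  shows "coeff ([:a, 0, 1:] ^ Suc N) (2 * N) = of_nat (Suc N) * a"
proof (induction N)
  case (Suc N)
  have "2 * Suc N - 2 = 2 * N" by simp
  then show ?case
    unfolding coeff_quadratic_power_Suc[of a "Suc N"]
    using Suc.IH coeff_quadratic_power_degree[of a "Suc N"] by (simp add: algebra_simps)
qed simp


lemma two_le_card_field: "2 \<le> CARD('a::{finite,field})"
  using card_mono[of UNIV "{0, 1 :: 'a}"] by simp

lemma ex_nonzero_avoiding:
  fixes b :: "'a::{finite,field}"
  assumes "CARD('a) \<noteq> 2"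
  obtains x where "x \<noteq> 0" and "x \<noteq> b"
proof -
  have "\<not> UNIV \<subseteq> {0, b :: 'a}"
  proof
    assume "UNIV \<subseteq> {0, b :: 'a}"
    then have "CARD('a) \<le> 2"
      using card_mono[of "{0, b}" UNIV] by (simp add: card_insert_if split: if_splits)
    then show False using assms two_le_card_field[where 'a = 'a] by simp
  qed
  then show ?thesis using that by blast
qed


definition support :: "nat \<Rightarrow> (nat \<Rightarrow> 'a::zero) \<Rightarrow> nat set" where
  "support n c = {i \<in> {..<n}. c i \<noteq> 0}"

lemma support_subset: "support n c \<subseteq> {..<n}"
  by (auto simp: support_def)

lemma finite_support [simp]: "finite (support n c)"
  using support_subset finite_subset by blast

lemma wt_eq_card_support: "wt n c = card (support n c)"
  by (simp add: wt_def support_def)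

lemma wt_le: "wt n c \<le> n"
  using card_mono[OF finite_lessThan support_subset] by (simp add: wt_eq_card_support)

lemma diff_wt_eq_card_zeros: "n - wt n c = card {i \<in> {..<n}. c i = 0}"
proof -
  have "{i \<in> {..<n}. c i = 0} = {..<n} - support n c"
    by (auto simp: support_def)
  then show ?thesis
    by (simp add: wt_eq_card_support card_Diff_subset support_subset)
qed

lemma support_add_smult_eq:
  fixes u v :: "nat \<Rightarrow> 'a::field"
  assumes "t \<noteq> 0" and "\<And>x. x \<in> support n u \<Longrightarrow> x \<in> support n v \<Longrightarrow> u x + t * v x \<noteq> 0"
  shows "support n (\<lambda>x. u x + t * v x) = support n u \<union> support n v"
proof (intro equalityI subsetI)
  fix x assume "x \<in> support n u \<union> support n v"
  then show "x \<in> support n (\<lambda>x. u x + t * v x)"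
    using assms by (cases "x \<in> support n u \<inter> support n v") (auto simp: support_def)
qed (auto simp: support_def)

lemma full_wt_nonzero: "wt n c = n \<Longrightarrow> i < n \<Longrightarrow> c i \<noteq> 0"
  using diff_wt_eq_card_zeros[of n c] by auto

lemma of_nat_card_filter_eq_sum:
  "finite A \<Longrightarrow> of_nat (card {x \<in> A. P x}) = (\<Sum>x\<in>A. if P x then 1 else (0::'a::semiring_1))"
  using sum.inter_filter[of A "\<lambda>_. 1::'a" P] by simp

lemma sum_diff_wt_eq_sum_card_zeros:
  fixes C :: "(nat \<Rightarrow> 'a::zero) set"
  assumes "finite C"
  shows "(\<Sum>c\<in>C. n - wt n c) = (\<Sum>i<n. card {c \<in> C. c i = 0})"
proof -
  have "n - wt n c = (\<Sum>i<n. if c i = 0 then 1 else 0)" for c :: "nat \<Rightarrow> 'a"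
    using of_nat_card_filter_eq_sum[of "{..<n}" "\<lambda>i. c i = 0", where 'a = nat]
    by (simp add: diff_wt_eq_card_zeros)
  then have "(\<Sum>c\<in>C. n - wt n c) = (\<Sum>c\<in>C. \<Sum>i<n. if c i = 0 then 1 else 0)"
    by simp
  also have "\<dots> = (\<Sum>i<n. \<Sum>c\<in>C. if c i = 0 then 1 else 0)"
    by (rule sum.swap)
  also have "\<dots> = (\<Sum>i<n. card {c \<in> C. c i = 0})"
    using of_nat_card_filter_eq_sum[OF assms, where 'a = nat] by simp
  finally show ?thesis .
qed


section \<open>The weight enumerator\<close>

lemma pderiv_sum: "pderiv (sum f A) = (\<Sum>x\<in>A. pderiv (f x))"
  by (induction A rule: infinite_finite_induct) (simp_all add: pderiv_add)

lemma coeff_weight_enum: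
  assumes "finite C"
  shows "coeff (weight_enum n C) k = real (card {c \<in> C. n - wt n c = k})"
  using assms by (simp add: weight_enum_def coeff_sum of_nat_card_filter_eq_sum)

lemma poly_weight_enum_1: "poly (weight_enum n C) 1 = real (card C)"
  by (simp add: weight_enum_def poly_sum poly_monom)

lemma poly_pderiv_weight_enum_1: "poly (pderiv (weight_enum n C)) 1 = real (\<Sum>c\<in>C. n - wt n c)"
  by (simp add: weight_enum_def pderiv_sum poly_sum pderiv_monom poly_monom)

context
  fixes C :: "(nat \<Rightarrow> 'a::zero) set" and N :: nat and a :: real
  assumes finite_C: "finite C" and enum: "weight_enum (2 * N) C = [:a, 0, 1:] ^ N"
begin

lemma quadratic_enum_even_wt:
  assumes "c \<in> C"
  shows "even (wt (2 * N) c)"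
proof (rule ccontr)
  assume "odd (wt (2 * N) c)"
  then have "odd (2 * N - wt (2 * N) c)"
    using wt_le[of "2 * N" c] by simp
  then have "coeff (weight_enum (2 * N) C) (2 * N - wt (2 * N) c) = 0"
    by (simp add: enum coeff_quadratic_power_odd)
  then have "card {d \<in> C. 2 * N - wt (2 * N) d = 2 * N - wt (2 * N) c} = 0"
    by (simp add: coeff_weight_enum[OF finite_C])
  then show False
    using assms finite_C by auto
qed

lemma quadratic_enum_ex_full_wt:
  assumes "a \<noteq> 0"
  shows "\<exists>c\<in>C. wt (2 * N) c = 2 * N"
proof -
  have "{c \<in> C. 2 * N - wt (2 * N) c = 0} = {c \<in> C. wt (2 * N) c = 2 * N}"
    using wt_le[of "2 * N"] by (auto intro: le_antisym)
  then have "real (card {c \<in> C. wt (2 * N) c = 2 * N}) = a ^ N"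
    using coeff_weight_enum[OF finite_C, of "2 * N" 0] by (simp add: enum coeff_0_power)
  then have "real (card {c \<in> C. wt (2 * N) c = 2 * N}) \<noteq> 0"
    using assms by simp
  then show ?thesis
    by (auto simp: card_eq_0_iff)
qed

lemma quadratic_enum_card_wt_two:
  assumes "0 < N"
  shows "real (card {c \<in> C. wt (2 * N) c = 2}) = real N * a"
proof -
  have "2 * N - wt (2 * N) c = 2 * (N - 1) \<longleftrightarrow> wt (2 * N) c = 2" for c :: "nat \<Rightarrow> 'a"
    using wt_le[of "2 * N" c] assms by linarith
  then have "{c \<in> C. 2 * N - wt (2 * N) c = 2 * (N - 1)} = {c \<in> C. wt (2 * N) c = 2}"
    by simp
  moreover have "coeff ([:a, 0, 1:] ^ N) (2 * (N - 1)) = real N * a"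
    using coeff_quadratic_power_subdegree[of a "N - 1"] assms by simp
  ultimately show ?thesis
    using coeff_weight_enum[OF finite_C, of "2 * N" "2 * (N - 1)"] by (simp add: enum)
qed

lemma quadratic_enum_card: "real (card C) = (1 + a) ^ N"
  using poly_weight_enum_1[of "2 * N" C] by (simp add: enum add.commute)

lemma quadratic_enum_sum_diff_wt:
  "real (\<Sum>c\<in>C. 2 * N - wt (2 * N) c) = 2 * real N * (1 + a) ^ (N - 1)"
proof -
  have "pderiv [:a, 0, 1::real:] = [:0, 2:]"
    by (simp add: pderiv_pCons)
  then show ?thesis
    using poly_pderiv_weight_enum_1[of "2 * N" C]
    by (simp add: enum pderiv_power add.commute)
qed

end


lemma finite_Fqn: "finite (Fqn n :: (nat \<Rightarrow> 'a::{finite,field}) set)"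
proof -
  have "Fqn n = {v. \<forall>i. (i \<in> {..<n} \<longrightarrow> v i \<in> (UNIV :: 'a set)) \<and> (i \<notin> {..<n} \<longrightarrow> v i = 0)}"
    unfolding Fqn_def by auto
  then show ?thesis by (simp only:) (rule finite_set_of_finite_funs; simp)
qed

lemma linear_code_finite: "linear_code n (C :: (nat \<Rightarrow> 'a::{finite,field}) set) \<Longrightarrow> finite C"
  using finite_Fqn finite_subset unfolding linear_code_def by blast

lemma linear_code_vanishes: "linear_code n C \<Longrightarrow> c \<in> C \<Longrightarrow> n \<le> i \<Longrightarrow> c i = 0"
  unfolding linear_code_def Fqn_def by auto

lemma linear_code_zero: "linear_code n C \<Longrightarrow> (\<lambda>_. 0) \<in> C"
  unfolding linear_code_def by auto

lemma linear_code_smult: "linear_code n C \<Longrightarrow> v \<in> C \<Longrightarrow> (\<lambda>i. t * v i) \<in> C"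
  unfolding linear_code_def by auto

lemma linear_code_add_smult: "linear_code n C \<Longrightarrow> u \<in> C \<Longrightarrow> v \<in> C \<Longrightarrow> (\<lambda>i. u i + t * v i) \<in> C"
  unfolding linear_code_def by auto

lemma linear_code_diff_smult: "linear_code n C \<Longrightarrow> u \<in> C \<Longrightarrow> v \<in> C \<Longrightarrow> (\<lambda>i. u i - t * v i) \<in> C"
  using linear_code_add_smult[of n C u v "- t"] by simp

lemma linear_code_sum:
  assumes "linear_code n C" and "\<And>l. l \<in> L \<Longrightarrow> f l \<in> C"
  shows "(\<lambda>i. \<Sum>l\<in>L. f l i) \<in> C"
  using assms(2)
proof (induction L rule: infinite_finite_induct)
  case (insert l L)
  then show ?case
    using linear_code_add_smult[OF assms(1), of "f l" _ 1] by simp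
qed (use linear_code_zero[OF assms(1)] in simp_all)

lemma linear_code_in_support_iff:
  "linear_code n C \<Longrightarrow> c \<in> C \<Longrightarrow> i \<in> support n c \<longleftrightarrow> c i \<noteq> 0"
  using linear_code_vanishes[of n C c i] leI by (auto simp: support_def)

lemma linear_code_eq_zero_if_wt_eq_0:
  assumes "linear_code n C" "c \<in> C" "wt n c = 0"
  shows "c = (\<lambda>_. 0)"
proof
  fix i
  have "support n c = {}"
    using assms(3) by (simp add: wt_eq_card_support)
  then show "c i = 0"
    using linear_code_in_support_iff[OF assms(1,2), of i] by simp
qed

lemma card_linear_code_eq_card_mult_card_zeros:
  fixes C :: "(nat \<Rightarrow> 'a::{finite,field}) set"
  assumes lc: "linear_code n C" and u: "u \<in> C" "u i \<noteq> 0"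
  shows "card C = CARD('a) * card {c \<in> C. c i = 0}"
proof -
  let ?Z = "{c \<in> C. c i = 0}"
  have "bij_betw (\<lambda>c. (c i, \<lambda>j. c j - (c i / u i) * u j)) C (UNIV \<times> ?Z)"
  proof (rule bij_betw_byWitness[where f' = "\<lambda>(x, z) j. z j + (x / u i) * u j"])
    show "(\<lambda>c. (c i, \<lambda>j. c j - (c i / u i) * u j)) ` C \<subseteq> UNIV \<times> ?Z"
    proof (rule image_subsetI)
      fix c assume "c \<in> C"
      then have "(\<lambda>j. c j - (c i / u i) * u j) \<in> C"
        by (rule linear_code_diff_smult[OF lc _ u(1)])
      then show "(c i, \<lambda>j. c j - (c i / u i) * u j) \<in> UNIV \<times> ?Z"
        using u(2) by simp
    qed
    show "(\<lambda>(x, z) j. z j + (x / u i) * u j) ` (UNIV \<times> ?Z) \<subseteq> C"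
    proof clarify
      fix x z assume "z \<in> C"
      then show "(\<lambda>j. z j + (x / u i) * u j) \<in> C"
        by (rule linear_code_add_smult[OF lc _ u(1)])
    qed
  qed (use u(2) in auto)
  then show ?thesis
    by (simp add: bij_betw_same_card card_cartesian_product)
qed

lemma linear_code_quadratic_enum_parameter:
  fixes C :: "(nat \<Rightarrow> 'a::{finite,field}) set"
  assumes lc: "linear_code (2 * N) C" and "0 < N" and "a \<noteq> 0"
    and enum: "weight_enum (2 * N) C = [:a, 0, 1:] ^ N"
  shows "a = real CARD('a) - 1"
proof -
  have fin: "finite C" by (rule linear_code_finite[OF lc])
  obtain u where u: "u \<in> C" "wt (2 * N) u = 2 * N"
    using quadratic_enum_ex_full_wt[OF fin enum \<open>a \<noteq> 0\<close>] by blast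
  have "CARD('a) * card {c \<in> C. c i = 0} = card C" if "i < 2 * N" for i
    using card_linear_code_eq_card_mult_card_zeros[OF lc u(1) full_wt_nonzero[OF u(2) that]] by simp
  then have "CARD('a) * (\<Sum>c\<in>C. 2 * N - wt (2 * N) c) = 2 * N * card C"
    by (simp add: sum_diff_wt_eq_sum_card_zeros[OF fin] sum_distrib_left)
  then have "real CARD('a) * real (\<Sum>c\<in>C. 2 * N - wt (2 * N) c) = 2 * real N * real (card C)"
    unfolding of_nat_mult[symmetric] by simp
  then have card_eq: "real CARD('a) * (2 * real N * (1 + a) ^ (N - 1)) = 2 * real N * (1 + a) ^ N"
    by (simp only: quadratic_enum_card[OF fin enum] quadratic_enum_sum_diff_wt[OF fin enum])
  have power_eq: "(1 + a) ^ N = (1 + a) * (1 + a) ^ (N - 1)"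
    using \<open>0 < N\<close> by (simp add: power_eq_if)
  have "card C \<noteq> 0"
    using linear_code_zero[OF lc] fin by auto
  then have "(1 + a) ^ N \<noteq> 0"
    by (simp flip: quadratic_enum_card[OF fin enum])
  then have "2 * real N * (1 + a) ^ (N - 1) \<noteq> 0"
    using power_eq \<open>0 < N\<close> by auto
  moreover have "2 * real N * (1 + a) ^ (N - 1) * real CARD('a) = 2 * real N * (1 + a) ^ (N - 1) * (1 + a)"
    using card_eq unfolding power_eq by (simp only: ac_simps)
  ultimately have "real CARD('a) = 1 + a"
    using mult_left_cancel by blast
  then show ?thesis
    by simp
qed


section \<open>Words of weight two in an even linear code\<close>

lemma support_eq_pair:
  assumes "wt n u = 2" and "j \<in> support n u"
  obtains i where "support n u = {i, j}" and "i \<noteq> j"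
proof -
  obtain x y where xy: "support n u = {x, y}" "x \<noteq> y"
    using assms(1) by (auto simp: wt_eq_card_support card_2_iff)
  show ?thesis
  proof (cases "j = x")
    case True
    then show ?thesis
      using that[of y] xy by (simp add: insert_commute)
  next
    case False
    then show ?thesis
      using that[of x] xy assms(2) by auto
  qed
qed

context
  fixes C :: "(nat \<Rightarrow> 'a::{finite,field}) set" and n :: nat
  assumes lc: "linear_code n C" and even_wt: "\<And>c. c \<in> C \<Longrightarrow> even (wt n c)"
begin

lemma weight_two_proportional:
  assumes u: "u \<in> C" "wt n u = 2" and v: "v \<in> C" "support n v \<subseteq> support n u"
    and i: "i \<in> support n u"
  shows "v = (\<lambda>k. (v i / u i) * u k)"
proof -
  define w where "w k = v k - (v i / u i) * u k" for k
  have "w \<in> C"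
    unfolding w_def by (rule linear_code_diff_smult[OF lc v(1) u(1)])
  have "u i \<noteq> 0"
    using i by (simp add: support_def)
  have "w k = 0" if "k < n" "k \<notin> support n u - {i}" for k
  proof (cases "k = i")
    case True
    then show ?thesis
      using \<open>u i \<noteq> 0\<close> by (simp add: w_def)
  next
    case False
    then have "u k = 0" "v k = 0"
      using that v(2) unfolding support_def by auto
    then show ?thesis
      by (simp add: w_def)
  qed
  then have "support n w \<subseteq> support n u - {i}"
    unfolding support_def[of n w] by blast
  then have "wt n w \<le> 1"
    using card_mono[of "support n u - {i}" "support n w"] u(2) i
    by (simp add: wt_eq_card_support)
  then have "wt n w = 0"
    using even_wt[OF \<open>w \<in> C\<close>] by (cases "wt n w") auto
  then have "w = (\<lambda>_. 0)"
    by (rule linear_code_eq_zero_if_wt_eq_0[OF lc \<open>w \<in> C\<close>])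
  show ?thesis
  proof
    fix k
    have "w k = 0"
      using \<open>w = (\<lambda>_. 0)\<close> by simp
    then show "v k = (v i / u i) * u k"
      by (simp add: w_def)
  qed
qed

lemma weight_two_supports_disjoint:
  assumes q: "CARD('a) \<noteq> 2"
    and u: "u \<in> C" "wt n u = 2" and v: "v \<in> C" "wt n v = 2"
    and ne: "support n u \<noteq> support n v"
  shows "support n u \<inter> support n v = {}"
proof (rule ccontr)
  assume "support n u \<inter> support n v \<noteq> {}"
  then obtain j where j: "j \<in> support n u" "j \<in> support n v"
    by blast
  obtain i where i: "support n u = {i, j}" "i \<noteq> j"
    using support_eq_pair[OF u(2) j(1)] .
  obtain k where k: "support n v = {k, j}" "k \<noteq> j"
    using support_eq_pair[OF v(2) j(2)] .
  have "i \<noteq> k"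
    using i k ne by auto
  then have common: "support n u \<inter> support n v = {j}"
    using i k by auto
  have "v j \<noteq> 0"
    using j(2) by (simp add: support_def)
  obtain t where t: "t \<noteq> 0" "t \<noteq> - u j / v j"
    using ex_nonzero_avoiding[OF q] .
  then have "u j + t * v j \<noteq> 0"
    using \<open>v j \<noteq> 0\<close> by (auto simp: field_simps add_eq_0_iff)
  define w where "w x = u x + t * v x" for x
  have "w \<in> C"
    unfolding w_def by (rule linear_code_add_smult[OF lc u(1) v(1)])
  have "support n w = support n u \<union> support n v"
    unfolding w_def by (rule support_add_smult_eq[OF t(1)]) (use common \<open>u j + t * v j \<noteq> 0\<close> in auto)
  then have "support n w = {i, j, k}"
    using i k by auto
  then have "wt n w = 3"
    using i k \<open>i \<noteq> k\<close> by (simp add: wt_eq_card_support)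
  then show False
    using even_wt[OF \<open>w \<in> C\<close>] by simp
qed

lemma card_weight_two_same_support:
  assumes u: "u \<in> C" "wt n u = 2"
  shows "card {c \<in> C. wt n c = 2 \<and> support n c = support n u} = CARD('a) - 1"
proof -
  have "support n u \<noteq> {}"
    using u(2) by (auto simp: wt_eq_card_support)
  then obtain i where i: "i \<in> support n u"
    by blast
  then have "u i \<noteq> 0"
    by (simp add: support_def)
  have "{c \<in> C. wt n c = 2 \<and> support n c = support n u} = (\<lambda>t k. t * u k) ` (UNIV - {0})"
  proof
    show "{c \<in> C. wt n c = 2 \<and> support n c = support n u} \<subseteq> (\<lambda>t k. t * u k) ` (UNIV - {0})"
    proof
      fix c assume c: "c \<in> {c \<in> C. wt n c = 2 \<and> support n c = support n u}"
      then have "c = (\<lambda>k. (c i / u i) * u k)"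
        using weight_two_proportional[OF u _ _ i] by blast
      moreover have "i \<in> support n c"
        using c i by simp
      then have "c i / u i \<noteq> 0"
        using \<open>u i \<noteq> 0\<close> by (simp add: support_def)
      ultimately show "c \<in> (\<lambda>t k. t * u k) ` (UNIV - {0})"
        by blast
    qed
    have "support n (\<lambda>k. t * u k) = support n u" if "t \<noteq> 0" for t
      using that by (simp add: support_def)
    then show "(\<lambda>t k. t * u k) ` (UNIV - {0}) \<subseteq> {c \<in> C. wt n c = 2 \<and> support n c = support n u}"
      using linear_code_smult[OF lc u(1)] u(2) by (auto simp: wt_eq_card_support)
  qed
  moreover have "inj_on (\<lambda>t k. t * u k) (UNIV - {0})"
    using \<open>u i \<noteq> 0\<close> by (auto intro!: inj_onI dest: fun_cong[where x = i])
  ultimately show ?thesis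
    by (simp add: card_image card_Diff_singleton)
qed

lemma weight_two_supports_partition:
  assumes q: "CARD('a) \<noteq> 2" and n: "n = 2 * N"
    and count: "card {c \<in> C. wt n c = 2} = N * (CARD('a) - 1)"
  defines "T \<equiv> support n ` {c \<in> C. wt n c = 2}"
  shows "card T = N" and "\<Union>T = {..<n}" and "\<And>s. s \<in> T \<Longrightarrow> card s = 2" and "pairwise disjnt T"
proof -
  let ?S = "{c \<in> C. wt n c = 2}"
  have fin: "finite T"
    unfolding T_def using linear_code_finite[OF lc] by simp
  show two: "card s = 2" if "s \<in> T" for s
    using that by (auto simp: T_def wt_eq_card_support)
  show disj: "pairwise disjnt T"
    using weight_two_supports_disjoint[OF q] by (auto simp: T_def pairwise_def disjnt_def)
  define F where "F s = {c \<in> ?S. support n c = s}" for s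
  have "?S = (\<Union>s\<in>T. F s)"
    by (auto simp: T_def F_def)
  moreover have "card (\<Union>s\<in>T. F s) = (\<Sum>s\<in>T. card (F s))"
    using fin linear_code_finite[OF lc] by (intro card_UN_disjoint) (auto simp: F_def)
  moreover have "card (F s) = CARD('a) - 1" if "s \<in> T" for s
    using that card_weight_two_same_support by (auto simp: T_def F_def)
  ultimately have "card ?S = card T * (CARD('a) - 1)"
    by simp
  then have "card T * (CARD('a) - 1) = N * (CARD('a) - 1)"
    using count by (simp only:)
  then show card_T: "card T = N"
    using two_le_card_field[where 'a = 'a] by simp
  have "card (\<Union>T) = sum card T"
    by (rule card_Union_disjoint[OF disj]) (auto simp: T_def)
  also have "\<dots> = 2 * N"
    using two card_T by simp
  finally have "card (\<Union>T) = 2 * N" .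
  moreover have "\<Union>T \<subseteq> {..<n}"
    using support_subset by (auto simp: T_def)
  ultimately show "\<Union>T = {..<n}"
    using n by (simp add: card_subset_eq)
qed

end


section \<open>Monomial equivalence with the repetition code\<close>

lemma card_rep_sum_code: "card (rep_sum_code (2 * N) :: (nat \<Rightarrow> 'a::{finite,field}) set) = CARD('a) ^ N"
proof -
  define g :: "(nat \<Rightarrow> 'a) \<Rightarrow> nat \<Rightarrow> 'a" where "g m = (\<lambda>j. if j < 2 * N then m (j div 2) else 0)" for m
  have "rep_sum_code (2 * N) = g ` ({..<N} \<rightarrow>\<^sub>E UNIV)"
  proof
    show "rep_sum_code (2 * N) \<subseteq> g ` ({..<N} \<rightarrow>\<^sub>E UNIV)"
    proof
      fix v :: "nat \<Rightarrow> 'a" assume "v \<in> rep_sum_code (2 * N)"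
      then obtain m where "v = g m"
        by (auto simp: rep_sum_code_def g_def)
      moreover have "g m = g (restrict m {..<N})"
        by (auto simp: g_def fun_eq_iff)
      ultimately show "v \<in> g ` ({..<N} \<rightarrow>\<^sub>E UNIV)"
        by auto
    qed
    show "g ` ({..<N} \<rightarrow>\<^sub>E UNIV) \<subseteq> rep_sum_code (2 * N)"
      by (auto simp: rep_sum_code_def g_def)
  qed
  moreover have "inj_on g ({..<N} \<rightarrow>\<^sub>E UNIV)"
  proof (rule inj_onI)
    fix m m' assume m: "m \<in> {..<N} \<rightarrow>\<^sub>E UNIV" and m': "m' \<in> {..<N} \<rightarrow>\<^sub>E UNIV" and "g m = g m'"
    show "m = m'"
    proof (rule PiE_ext[OF m m'])
      fix l assume "l \<in> {..<N}"
      then show "m l = m' l"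
        using fun_cong[OF \<open>g m = g m'\<close>, of "2 * l"] by (simp add: g_def)
    qed
  qed
  ultimately show ?thesis
    by (simp add: card_image card_PiE)
qed

lemma pairing_permutation:
  fixes T :: "nat set set"
  assumes fin: "finite T" and card_T: "card T = N" and cover: "\<Union>T = {..<2 * N}"
    and two: "\<And>s. s \<in> T \<Longrightarrow> card s = 2"
  obtains e \<sigma> where "bij_betw e {..<N} T" and "\<sigma> permutes {..<2 * N}"
    and "\<And>i. i < 2 * N \<Longrightarrow> \<sigma> i \<in> e (i div 2)"
proof -
  obtain e where e: "bij_betw e {..<N} T"
    using ex_bij_betw_nat_finite[OF fin] card_T by (auto simp: atLeast0LessThan)
  have "\<exists>x y. e l = {x, y}" if "l < N" for l
    using two[of "e l"] bij_betwE[OF e] that by (auto simp: card_2_iff)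
  then obtain lo hi where pair: "\<And>l. l < N \<Longrightarrow> e l = {lo l, hi l}"
    by metis
  define \<sigma> where "\<sigma> j = (if j < 2 * N then if even j then lo (j div 2) else hi (j div 2) else j)" for j
  have \<sigma>_in: "\<sigma> i \<in> e (i div 2)" if "i < 2 * N" for i
    using pair[of "i div 2"] that by (auto simp: \<sigma>_def)
  have "\<sigma> ` {..<2 * N} = {..<2 * N}"
  proof
    show "\<sigma> ` {..<2 * N} \<subseteq> {..<2 * N}"
      using \<sigma>_in bij_betwE[OF e] cover by fastforce
    show "{..<2 * N} \<subseteq> \<sigma> ` {..<2 * N}"
    proof
      fix p assume "p \<in> {..<2 * N}"
      then obtain s where "p \<in> s" "s \<in> T"
        using cover by blast
      then obtain l where "l < N" "p \<in> e l"
        using bij_betw_imp_surj_on[OF e] by auto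
      then have "p = \<sigma> (2 * l) \<or> p = \<sigma> (2 * l + 1)"
        using pair by (auto simp: \<sigma>_def)
      moreover have "2 * l < 2 * N" "2 * l + 1 < 2 * N"
        using \<open>l < N\<close> by auto
      ultimately show "p \<in> \<sigma> ` {..<2 * N}"
        by auto
    qed
  qed
  then have "bij_betw \<sigma> {..<2 * N} {..<2 * N}"
    by (simp add: bij_betw_def eq_card_imp_inj_on)
  moreover have "\<sigma> i = i" if "i \<notin> {..<2 * N}" for i
    using that by (simp add: \<sigma>_def)
  ultimately have "\<sigma> permutes {..<2 * N}"
    by (rule bij_imp_permutes)
  then show ?thesis
    using that e \<sigma>_in by blast
qed

definition monomial_map :: "nat \<Rightarrow> (nat \<Rightarrow> nat) \<Rightarrow> (nat \<Rightarrow> 'a::field) \<Rightarrow> (nat \<Rightarrow> 'a) \<Rightarrow> nat \<Rightarrow> 'a" where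
  "monomial_map n \<sigma> d v = (\<lambda>i. if i < n then d i * v (\<sigma> i) else 0)"

lemma monomially_equivalentI:
  assumes "\<sigma> permutes {..<n}" and "\<And>i. i < n \<Longrightarrow> d i \<noteq> 0" and "C2 = monomial_map n \<sigma> d ` C1"
  shows "monomially_equivalent n C1 C2"
  using assms unfolding monomially_equivalent_def monomial_map_def[abs_def] by blast

lemma inj_on_monomial_map:
  assumes C: "C \<subseteq> Fqn n" and \<sigma>: "\<sigma> permutes {..<n}" and d: "\<And>i. i < n \<Longrightarrow> d i \<noteq> 0"
  shows "inj_on (monomial_map n \<sigma> d) C"
proof (rule inj_onI)
  fix u v assume "u \<in> C" "v \<in> C" and eq: "monomial_map n \<sigma> d u = monomial_map n \<sigma> d v"
  show "u = v"
  proof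
    fix p
    show "u p = v p"
    proof (cases "p < n")
      case True
      then have "p \<in> \<sigma> ` {..<n}"
        using permutes_image[OF \<sigma>] by simp
      then obtain i where "i < n" "p = \<sigma> i"
        by blast
      then show ?thesis
        using fun_cong[OF eq, of i] d by (simp add: monomial_map_def)
    next
      case False
      have "u \<in> Fqn n" "v \<in> Fqn n"
        using C \<open>u \<in> C\<close> \<open>v \<in> C\<close> by auto
      then show ?thesis
        using False by (simp add: Fqn_def not_less)
    qed
  qed
qed

lemma rep_sum_code_subset_monomial_map_image:
  fixes C :: "(nat \<Rightarrow> 'a::{finite,field}) set"
  assumes lc: "linear_code (2 * N) C"
    and w: "\<And>l. l < N \<Longrightarrow> w l \<in> C"
    and diag: "\<And>i. i < 2 * N \<Longrightarrow> w (i div 2) (\<sigma> i) \<noteq> 0"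
    and off_diag: "\<And>i l. i < 2 * N \<Longrightarrow> l < N \<Longrightarrow> l \<noteq> i div 2 \<Longrightarrow> w l (\<sigma> i) = 0"
  shows "rep_sum_code (2 * N) \<subseteq> monomial_map (2 * N) \<sigma> (\<lambda>i. inverse (w (i div 2) (\<sigma> i))) ` C"
proof
  fix v :: "nat \<Rightarrow> 'a" assume "v \<in> rep_sum_code (2 * N)"
  then obtain m where m: "v = (\<lambda>j. if j < 2 * N then m (j div 2) else 0)"
    by (auto simp: rep_sum_code_def)
  define c where "c p = (\<Sum>l<N. m l * w l p)" for p
  have "c \<in> C"
    unfolding c_def by (rule linear_code_sum[OF lc], rule linear_code_smult[OF lc w]) simp
  have c_at: "c (\<sigma> i) = m (i div 2) * w (i div 2) (\<sigma> i)" if "i < 2 * N" for i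
  proof -
    have "c (\<sigma> i) = (\<Sum>l<N. if l = i div 2 then m l * w l (\<sigma> i) else 0)"
      unfolding c_def using off_diag[OF that] by (intro sum.cong) auto
    then show ?thesis
      using that by simp
  qed
  have "monomial_map (2 * N) \<sigma> (\<lambda>i. inverse (w (i div 2) (\<sigma> i))) c i = v i" for i
  proof (cases "i < 2 * N")
    case True
    then show ?thesis
      using c_at[OF True] diag[OF True] by (simp add: monomial_map_def m)
  qed (simp add: monomial_map_def m)
  then have "monomial_map (2 * N) \<sigma> (\<lambda>i. inverse (w (i div 2) (\<sigma> i))) c = v" ..
  then show "v \<in> monomial_map (2 * N) \<sigma> (\<lambda>i. inverse (w (i div 2) (\<sigma> i))) ` C"
    using \<open>c \<in> C\<close> by blast
qed

lemma monomially_equivalent_rep_sum_codeI: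
  fixes C :: "(nat \<Rightarrow> 'a::{finite,field}) set"
  assumes lc: "linear_code (2 * N) C" and card_C: "card C = CARD('a) ^ N"
    and \<sigma>: "\<sigma> permutes {..<2 * N}"
    and w: "\<And>l. l < N \<Longrightarrow> w l \<in> C"
    and diag: "\<And>i. i < 2 * N \<Longrightarrow> w (i div 2) (\<sigma> i) \<noteq> 0"
    and off_diag: "\<And>i l. i < 2 * N \<Longrightarrow> l < N \<Longrightarrow> l \<noteq> i div 2 \<Longrightarrow> w l (\<sigma> i) = 0"
  shows "monomially_equivalent (2 * N) C (rep_sum_code (2 * N))"
proof (rule monomially_equivalentI[OF \<sigma>])
  \<comment> \<open>rescales each chosen word w l to the indicator of coordinates 2 l and 2 l + 1\<close>
  define d where "d i = inverse (w (i div 2) (\<sigma> i))" for i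
  show d: "d i \<noteq> 0" if "i < 2 * N" for i
    using diag[OF that] by (simp add: d_def)
  have "inj_on (monomial_map (2 * N) \<sigma> d) C"
    using lc \<sigma> d by (intro inj_on_monomial_map) (auto simp: linear_code_def)
  then have "card (monomial_map (2 * N) \<sigma> d ` C) = card (rep_sum_code (2 * N) :: (nat \<Rightarrow> 'a) set)"
    by (simp add: card_image card_C card_rep_sum_code)
  moreover have "rep_sum_code (2 * N) \<subseteq> monomial_map (2 * N) \<sigma> d ` C"
    unfolding d_def
    using rep_sum_code_subset_monomial_map_image[where w = w and \<sigma> = \<sigma>, OF lc w diag off_diag] .
  ultimately show "rep_sum_code (2 * N) = monomial_map (2 * N) \<sigma> d ` C"
    using linear_code_finite[OF lc] by (simp add: card_subset_eq)
qed

lemma monomially_equivalent_rep_sum_code_of_supports: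
  fixes C :: "(nat \<Rightarrow> 'a::{finite,field}) set" and T :: "nat set set"
  assumes lc: "linear_code (2 * N) C" and card_C: "card C = CARD('a) ^ N"
    and T: "finite T" "card T = N" "\<Union>T = {..<2 * N}" "\<And>s. s \<in> T \<Longrightarrow> card s = 2"
    and disj: "pairwise disjnt T"
    and supports: "\<And>s. s \<in> T \<Longrightarrow> \<exists>c\<in>C. support (2 * N) c = s"
  shows "monomially_equivalent (2 * N) C (rep_sum_code (2 * N))"
proof -
  obtain e \<sigma> where e: "bij_betw e {..<N} T" and \<sigma>: "\<sigma> permutes {..<2 * N}"
    and \<sigma>_in: "\<And>i. i < 2 * N \<Longrightarrow> \<sigma> i \<in> e (i div 2)"
    using pairing_permutation[OF T] by blast
  have "\<forall>l\<in>{..<N}. \<exists>c. c \<in> C \<and> support (2 * N) c = e l"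
    using supports bij_betwE[OF e] by blast
  then obtain w where "\<forall>l\<in>{..<N}. w l \<in> C \<and> support (2 * N) (w l) = e l"
    by (auto dest: bchoice)
  then have w: "w l \<in> C \<and> support (2 * N) (w l) = e l" if "l < N" for l
    using that by simp
  show ?thesis
  proof (rule monomially_equivalent_rep_sum_codeI[OF lc card_C \<sigma>])
    show "w l \<in> C" if "l < N" for l
      using w[OF that] ..
    show "w (i div 2) (\<sigma> i) \<noteq> 0" if "i < 2 * N" for i
    proof -
      have "i div 2 < N"
        using that by auto
      then have "\<sigma> i \<in> support (2 * N) (w (i div 2))"
        using w \<sigma>_in[OF that] by blast
      then show ?thesis
        by (simp add: support_def)
    qed
    show "w l (\<sigma> i) = 0" if "i < 2 * N" "l < N" "l \<noteq> i div 2" for i l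
    proof -
      have "e l \<noteq> e (i div 2)"
        using that bij_betw_imp_inj_on[OF e] by (auto simp: inj_on_def)
      moreover have "e l \<in> T" "e (i div 2) \<in> T"
        using bij_betwE[OF e] that by auto
      ultimately have "disjnt (e l) (e (i div 2))"
        using disj unfolding pairwise_def by blast
      then have "\<sigma> i \<notin> e l"
        using \<sigma>_in[OF that(1)] by (auto simp: disjnt_def)
      then show ?thesis
        using w[OF that(2)] permutes_image[OF \<sigma>] that(1) by (auto simp: support_def)
    qed
  qed
qed

lemma monomially_equivalent_rep_sum_code_of_weight_two_count:
  fixes C :: "(nat \<Rightarrow> 'a::{finite,field}) set"
  assumes lc: "linear_code (2 * N) C" and even_wt: "\<And>c. c \<in> C \<Longrightarrow> even (wt (2 * N) c)"
    and q: "CARD('a) \<noteq> 2" and card_C: "card C = CARD('a) ^ N"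
    and count: "card {c \<in> C. wt (2 * N) c = 2} = N * (CARD('a) - 1)"
  shows "monomially_equivalent (2 * N) C (rep_sum_code (2 * N))"
proof -
  define T where "T = support (2 * N) ` {c \<in> C. wt (2 * N) c = 2}"
  note partition = weight_two_supports_partition[OF lc even_wt q refl count, folded T_def]
  have supports: "\<exists>c\<in>C. support (2 * N) c = s" if "s \<in> T" for s
    using that by (auto simp: T_def)
  show ?thesis
    by (rule monomially_equivalent_rep_sum_code_of_supports[OF lc card_C _ partition supports])
      (simp add: T_def linear_code_finite[OF lc])
qed

theorem lemma3p3:
  fixes C :: "(nat \<Rightarrow> 'a::{finite,field}) set" and n :: nat and a :: real
  assumes "linear_code n C"
    and "even n" and "n > 0"
    and "CARD('a) \<noteq> 2"
    and "a \<noteq> 0"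
    and "weight_enum n C = [:a, 0, 1:] ^ (n div 2)"
  shows "a = real CARD('a) - 1 \<and> monomially_equivalent n C (rep_sum_code n)"
proof -
  obtain N where n: "n = 2 * N"
    using \<open>even n\<close> by blast
  have lc: "linear_code (2 * N) C" and "0 < N" and enum: "weight_enum (2 * N) C = [:a, 0, 1:] ^ N"
    using assms(1,3,6) n by simp_all
  have fin: "finite C"
    by (rule linear_code_finite[OF lc])
  have a: "a = real CARD('a) - 1"
    by (rule linear_code_quadratic_enum_parameter[OF lc \<open>0 < N\<close> \<open>a \<noteq> 0\<close> enum])
  have "real (card C) = real (CARD('a) ^ N)"
    using quadratic_enum_card[OF fin enum] a by simp
  then have card_C: "card C = CARD('a) ^ N"
    by (simp only: of_nat_eq_iff)
  have "real (card {c \<in> C. wt (2 * N) c = 2}) = real (N * (CARD('a) - 1))"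
    using quadratic_enum_card_wt_two[OF fin enum \<open>0 < N\<close>] a two_le_card_field[where 'a = 'a]
    by simp
  then have count: "card {c \<in> C. wt (2 * N) c = 2} = N * (CARD('a) - 1)"
    by (simp only: of_nat_eq_iff)
  have "monomially_equivalent (2 * N) C (rep_sum_code (2 * N))"
    using monomially_equivalent_rep_sum_code_of_weight_two_count[OF lc _ \<open>CARD('a) \<noteq> 2\<close> card_C count]
      quadratic_enum_even_wt[OF fin enum] by blast
  then show ?thesis
    using a n by simp
qed

end
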